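(* Let $h=(h_1,\dots,h_n):\mathbb C\to\mathbb R^n$ be a branched minimal immersion, write $\frac{\partial h_i}{\partial z}(z)=\sum_{j=0}^\infty c^i_jz^j$ and $c_j=(c^1_j,\dots,c^n_j)\in\mathbb C^n$. Then $h$ is holomorphic up to a rigid motion if and only if $g(c_m,c_k)=0$ for all integers $m,k\geq0$, where $g(u,v)=\sum_{i=1}^n u_iv_i$ is the standard complex bilinear form on $\mathbb C^n$.
   Context: A branched minimal immersion is a nonconstant smooth map that is harmonic and conformal. $h$ is holomorphic up to a rigid motion if its image lies in an even-dimensional affine subspace $b+W\subset\mathbb R^n$ and there is a linear $J:W\to W$ with $J^2=-I$ preserving the Euclidean inner product such that $dh\circ j=J\circ dh$, $j$ the standard complex structure on $\mathbb C$ (equivalently $Jh_x=h_y$, $Jh_y=-h_x$). *)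

theory Defs
  imports "HOL-Analysis.Analysis"
begin

definition pd :: "bool \<Rightarrow> (complex \<Rightarrow> 'a::real_normed_vector) \<Rightarrow> complex \<Rightarrow> 'a" where
  "pd d f z = frechet_derivative f (at z) (if d then \<i> else 1)"

abbreviation hx where "hx f \<equiv> pd False f"
abbreviation hy where "hy f \<equiv> pd True f"

fun iter_pd :: "bool list \<Rightarrow> (complex \<Rightarrow> 'a::real_normed_vector) \<Rightarrow> complex \<Rightarrow> 'a" where
  "iter_pd [] f = f"
| "iter_pd (d # ds) f = pd d (iter_pd ds f)"

definition smooth_map :: "(complex \<Rightarrow> 'a::real_normed_vector) \<Rightarrow> bool" where
  "smooth_map f \<longleftrightarrow> (\<forall>ds z. iter_pd ds f differentiable (at z))"

definition harmonic_map :: "(complex \<Rightarrow> 'a::real_normed_vector) \<Rightarrow> bool" where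
  "harmonic_map f \<longleftrightarrow> (\<forall>z. hx (hx f) z + hy (hy f) z = 0)"

definition conformal_map :: "(complex \<Rightarrow> 'a::real_inner) \<Rightarrow> bool" where
  "conformal_map f \<longleftrightarrow> (\<forall>z. norm (hx f z) = norm (hy f z) \<and> inner (hx f z) (hy f z) = 0)"

definition branched_minimal_immersion :: "(complex \<Rightarrow> 'a::real_inner) \<Rightarrow> bool" where
  "branched_minimal_immersion f \<longleftrightarrow>
     (\<exists>z w. f z \<noteq> f w) \<and> smooth_map f \<and> harmonic_map f \<and> conformal_map f"

definition holomorphic_up_to_rigid_motion :: "(complex \<Rightarrow> 'a::euclidean_space) \<Rightarrow> bool" where
  "holomorphic_up_to_rigid_motion f \<longleftrightarrow>
     (\<exists>b W J. subspace W \<and> even (dim W) \<and> (\<forall>z. f z - b \<in> W) \<and>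
        linear J \<and> J ` W \<subseteq> W \<and> (\<forall>w\<in>W. J (J w) = - w) \<and>
        (\<forall>u\<in>W. \<forall>v\<in>W. inner (J u) (J v) = inner u v) \<and>
        (\<forall>z. J (hx f z) = hy f z \<and> J (hy f z) = - hx f z))"

definition dz :: "(complex \<Rightarrow> real ^ 'n) \<Rightarrow> complex \<Rightarrow> complex ^ 'n" where
  "dz f z = (\<chi> i. (complex_of_real (hx f z $ i) - \<i> * complex_of_real (hy f z $ i)) / 2)"

definition gC :: "complex ^ 'n \<Rightarrow> complex ^ 'n \<Rightarrow> complex" where
  "gC u v = (\<Sum>i\<in>UNIV. u $ i * v $ i)"

end

theory Submission
  imports Defs "HOL-Complex_Analysis.Cauchy_Integral_Formula"
begin

text \<open>Both sides are statements about the set of values of h_z = (h_x - i h_y)/2.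
  If J h_x = h_y for an orthogonal complex structure J, then h_z = (h_x - i J h_x)/2 and
  g(x - i J x, y - i J y) = 0, so these values are g-isotropic. Conversely, if they are isotropic,
  so is the complex subspace V they span; Re is injective on V, and J (Re u) = Re (i u) is an
  orthogonal complex structure on W = Re V with J h_x = h_y, and h - h(0) takes values in W
  because its partial derivatives do. Finally, the values of h_z and its Taylor coefficients are
  isotropic together, as each set lies in the g-double annihilator of the other.\<close>

lemma powser_coeffs_eq_0_if_sums_0:
  fixes a :: "nat \<Rightarrow> 'a::{real_normed_field,banach}"
  assumes "\<And>z. (\<lambda>j. a j * z ^ j) sums 0"
  shows "a m = 0"
proof (rule ccontr)
  assume am: "a m \<noteq> 0"
  show False
  proof (cases "m = 0")
    case True
    have "(\<Sum>j. a j * 0 ^ j) = 0"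
      using assms[of 0] sums_unique by metis
    then show False
      using True am by (simp add: powser_zero)
  next
    case False
    show False
    proof (rule powser_0_nonzero[of 1 0 a "\<lambda>_. 0" m])
      fix s :: real
      assume "0 < s" and "\<And>z::'a. z \<in> cball 0 s - {0} \<Longrightarrow> (\<lambda>_. 0) z \<noteq> 0"
      moreover have "of_real s \<in> cball (0::'a) s - {0}"
        using \<open>0 < s\<close> by auto
      ultimately show False
        by blast
    qed (use assms am False in auto)
  qed
qed

definition orthogonal_complex_structure :: "'a::real_inner set \<Rightarrow> ('a \<Rightarrow> 'a) \<Rightarrow> bool" where
  "orthogonal_complex_structure W J \<longleftrightarrow>
     linear J \<and> J ` W \<subseteq> W \<and> (\<forall>w\<in>W. J (J w) = - w) \<and> (\<forall>u\<in>W. \<forall>v\<in>W. J u \<bullet> J v = u \<bullet> v)"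

lemma orthogonal_complex_structure_skew:
  assumes "orthogonal_complex_structure W J" "u \<in> W" "v \<in> W"
  shows "J u \<bullet> v = - (u \<bullet> J v)"
proof -
  have "J u \<bullet> J (J v) = u \<bullet> J v"
    using assms unfolding orthogonal_complex_structure_def by blast
  then show ?thesis
    using assms unfolding orthogonal_complex_structure_def by auto
qed

lemma orthogonal_complex_structure_subset:
  assumes "orthogonal_complex_structure W J" "U \<subseteq> W" "J ` U \<subseteq> U"
  shows "orthogonal_complex_structure U J"
  using assms unfolding orthogonal_complex_structure_def by blast

lemma dim_span_orthogonal_complex_structure_pair:
  assumes "orthogonal_complex_structure W J" and "w \<in> W" and "w \<noteq> 0"
  shows "dim (span {w, J w}) = 2"
proof -
  have J: "J w \<bullet> J w = w \<bullet> w"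
    using assms unfolding orthogonal_complex_structure_def by blast
  have w_Jw: "w \<bullet> J w = 0"
    using orthogonal_complex_structure_skew[OF assms(1,2,2)] by (simp add: inner_commute)
  have "independent {w, J w}"
    by (rule pairwise_orthogonal_independent)
       (use assms(3) J w_Jw in \<open>auto simp: pairwise_def orthogonal_def inner_commute\<close>)
  moreover have "w \<noteq> J w"
    using assms(3) w_Jw by auto
  ultimately show ?thesis
    by (simp add: dim_eq_card_independent)
qed

lemma orthogonal_complex_structure_orthogonal_to_pair:
  assumes "orthogonal_complex_structure W J" and "w \<in> W"
  shows "orthogonal_complex_structure {y \<in> W. \<forall>x\<in>span {w, J w}. orthogonal x y} J"
    (is "orthogonal_complex_structure ?W' J")
proof (rule orthogonal_complex_structure_subset[OF assms(1)])
  show "J ` ?W' \<subseteq> ?W'"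
  proof clarify
    fix y assume yW: "y \<in> W" and y_orth: "\<forall>x\<in>span {w, J w}. orthogonal x y"
    have "orthogonal w (J y)"
      using orthogonal_complex_structure_skew[OF assms yW] y_orth
      by (simp add: orthogonal_def span_base)
    moreover have "orthogonal (J w) (J y)"
      using assms yW y_orth unfolding orthogonal_complex_structure_def orthogonal_def
      by (simp add: span_base)
    ultimately have "orthogonal x (J y)" if "x \<in> span {w, J w}" for x
      using orthogonal_to_span[OF that, of "J y"] by (auto simp: orthogonal_commute)
    moreover have "J y \<in> W"
      using assms(1) yW unfolding orthogonal_complex_structure_def by blast
    ultimately show "J y \<in> W \<and> (\<forall>x\<in>span {w, J w}. orthogonal x (J y))"
      by blast
  qed
qed blast

lemma even_dim_if_orthogonal_complex_structure:
  fixes W :: "'a::euclidean_space set"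
  assumes "subspace W" "orthogonal_complex_structure W J"
  shows "even (dim W)"
  using assms
proof (induction "dim W" arbitrary: W rule: less_induct)
  case less
  show ?case
  proof (cases "W \<subseteq> {0}")
    case True
    then show ?thesis
      by (metis dim_eq_0 even_zero)
  next
    case False
    then obtain w where w: "w \<in> W" "w \<noteq> 0"
      by auto
    define A where "A = span {w, J w}"
    define W' where "W' = {y \<in> W. \<forall>x\<in>A. orthogonal x y}"
    have "A \<subseteq> W"
      using less.prems w unfolding A_def orthogonal_complex_structure_def
      by (simp add: span_minimal image_subset_iff)
    then have dim_W: "dim W' + 2 = dim W"
      using dim_subspace_orthogonal_to_vectors[of A W] less.prems(1)
        dim_span_orthogonal_complex_structure_pair[OF less.prems(2) w]
      unfolding W'_def A_def by simp
    have "subspace W'"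
      unfolding W'_def using less.prems(1) subspace_orthogonal_to_vectors[of A]
      by (simp add: Collect_conj_eq subspace_inter)
    then have "even (dim W')"
      using less.hyps[of W'] dim_W
        orthogonal_complex_structure_orthogonal_to_pair[OF less.prems(2) w(1)]
      unfolding W'_def A_def by simp
    then show ?thesis
      by (simp flip: dim_W)
  qed
qed

lemma has_derivative_partials:
  fixes h :: "complex \<Rightarrow> 'a::real_normed_vector"
  assumes "h differentiable (at z)"
  shows "(h has_derivative (\<lambda>t. Re t *\<^sub>R hx h z + Im t *\<^sub>R hy h z)) (at z)"
proof -
  let ?D = "frechet_derivative h (at z)"
  have D: "(h has_derivative ?D) (at z)"
    using assms frechet_derivative_works by blast
  have "?D t = Re t *\<^sub>R hx h z + Im t *\<^sub>R hy h z" for t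
  proof -
    have "t = Re t *\<^sub>R 1 + Im t *\<^sub>R \<i>"
      by (simp add: complex_eq_iff)
    then have "?D t = ?D (Re t *\<^sub>R 1 + Im t *\<^sub>R \<i>)"
      by (rule arg_cong)
    also have "\<dots> = Re t *\<^sub>R ?D 1 + Im t *\<^sub>R ?D \<i>"
      using has_derivative_linear[OF D] by (simp only: linear_add linear_scale)
    finally show ?thesis
      by (simp add: pd_def)
  qed
  then have "?D = (\<lambda>t. Re t *\<^sub>R hx h z + Im t *\<^sub>R hy h z)"
    by (rule ext)
  then show ?thesis
    using D by metis
qed

lemma inner_const_iff_inner_partials_eq_0:
  fixes h :: "complex \<Rightarrow> 'a::real_inner"
  assumes "\<And>z. h differentiable (at z)"
  shows "(\<exists>k. \<forall>z. v \<bullet> h z = k) \<longleftrightarrow> (\<forall>z. v \<bullet> hx h z = 0 \<and> v \<bullet> hy h z = 0)"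
proof -
  have D: "((\<lambda>t. v \<bullet> h t) has_derivative (\<lambda>t. Re t * (v \<bullet> hx h z) + Im t * (v \<bullet> hy h z))) (at z)"
    for z
    using has_derivative_inner_right[OF has_derivative_partials[OF assms]]
    by (simp add: inner_add_right)
  show ?thesis
  proof
    assume "\<exists>k. \<forall>z. v \<bullet> h z = k"
    then obtain k where "(\<lambda>t. v \<bullet> h t) = (\<lambda>_. k)"
      by auto
    then have "((\<lambda>t. v \<bullet> h t) has_derivative (\<lambda>_. 0)) (at z)" for z
      by simp
    then have "(\<lambda>t. Re t * (v \<bullet> hx h z) + Im t * (v \<bullet> hy h z)) = (\<lambda>_. 0)" for z
      using D has_derivative_unique by blast
    then have "Re t * (v \<bullet> hx h z) + Im t * (v \<bullet> hy h z) = 0" for z t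
      by (simp add: fun_eq_iff)
    from this[where t = 1] this[where t = \<i>]
    show "\<forall>z. v \<bullet> hx h z = 0 \<and> v \<bullet> hy h z = 0"
      by simp
  next
    assume "\<forall>z. v \<bullet> hx h z = 0 \<and> v \<bullet> hy h z = 0"
    then have "((\<lambda>t. v \<bullet> h t) has_derivative (\<lambda>_. 0)) (at z within UNIV)" for z
      using D[of z] by simp
    then show "\<exists>k. \<forall>z. v \<bullet> h z = k"
      using has_derivative_zero_constant[of UNIV] by auto
  qed
qed

lemma translate_in_subspace_iff_partials_in_subspace:
  fixes h :: "complex \<Rightarrow> 'a::euclidean_space"
  assumes "subspace W" and "\<And>z. h differentiable (at z)"
  shows "(\<exists>b. \<forall>z. h z - b \<in> W) \<longleftrightarrow> (\<forall>z. hx h z \<in> W \<and> hy h z \<in> W)"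
proof -
  have mem_W: "x \<in> W \<longleftrightarrow> (\<forall>v\<in>W\<^sup>\<bottom>. v \<bullet> x = 0)" for x
    using orthogonal_comp_self[OF assms(1)]
    by (auto simp: orthogonal_comp_def orthogonal_def)
  have "(\<exists>b. \<forall>z. h z - b \<in> W) \<longleftrightarrow> (\<forall>v\<in>W\<^sup>\<bottom>. \<exists>k. \<forall>z. v \<bullet> h z = k)"
  proof
    assume "\<exists>b. \<forall>z. h z - b \<in> W"
    then obtain b where "\<forall>v\<in>W\<^sup>\<bottom>. \<forall>z. v \<bullet> (h z - b) = 0"
      using mem_W by blast
    then show "\<forall>v\<in>W\<^sup>\<bottom>. \<exists>k. \<forall>z. v \<bullet> h z = k"
      by (auto simp: inner_diff_right)
  next
    assume "\<forall>v\<in>W\<^sup>\<bottom>. \<exists>k. \<forall>z. v \<bullet> h z = k"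
    then have "\<forall>z. h z - h 0 \<in> W"
      unfolding mem_W by (auto simp: inner_diff_right)
    then show "\<exists>b. \<forall>z. h z - b \<in> W" ..
  qed
  also have "\<dots> \<longleftrightarrow> (\<forall>z. hx h z \<in> W \<and> hy h z \<in> W)"
    unfolding inner_const_iff_inner_partials_eq_0[OF assms(2)] mem_W by blast
  finally show ?thesis .
qed

definition vec_Re :: "complex ^ 'n \<Rightarrow> real ^ 'n" where
  "vec_Re u = (\<chi> i. Re (u $ i))"

definition vec_Im :: "complex ^ 'n \<Rightarrow> real ^ 'n" where
  "vec_Im u = (\<chi> i. Im (u $ i))"

lemma linear_vec_Re: "linear vec_Re"
  by (rule linearI) (simp_all add: vec_Re_def vec_eq_iff)

lemma vec_Re_mult_ii: "vec_Re (\<i> *s u) = - vec_Im u"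
  by (simp add: vec_Re_def vec_Im_def vec_eq_iff)

lemma vec_Re_dz: "vec_Re (dz f z) = (1/2) *\<^sub>R hx f z"
  and vec_Im_dz: "vec_Im (dz f z) = - (1/2) *\<^sub>R hy f z"
  by (simp_all add: vec_Re_def vec_Im_def dz_def vec_eq_iff)

lemma Re_gC: "Re (gC u v) = vec_Re u \<bullet> vec_Re v - vec_Im u \<bullet> vec_Im v"
  and Im_gC: "Im (gC u v) = vec_Re u \<bullet> vec_Im v + vec_Im u \<bullet> vec_Re v"
  by (simp_all add: gC_def vec_Re_def vec_Im_def inner_vec_def Re_sum Im_sum
      sum.distrib sum_subtractf)

lemma gC_commute: "gC u v = gC v u"
  by (simp add: gC_def mult.commute)

lemma gC_zero_right: "gC w 0 = 0"
  by (simp add: gC_def)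

lemma gC_add_right: "gC w (u + v) = gC w u + gC w v"
  by (simp add: gC_def distrib_left sum.distrib)

lemma gC_scaleR_right: "gC w (r *\<^sub>R u) = r *\<^sub>R gC w u"
  by (simp add: gC_def scaleR_sum_right)

lemma gC_mult_right: "gC w (a *s u) = a * gC w u"
  by (simp add: gC_def sum_distrib_left algebra_simps)

lemma gC_self_eq_0_imp_eq_0:
  assumes "gC u u = 0" and "vec_Re u = 0"
  shows "u = 0"
proof -
  have "vec_Im u \<bullet> vec_Im u = 0"
    using arg_cong[OF assms(1), of Re] assms(2) by (simp add: Re_gC)
  then have "vec_Im u = 0"
    by simp
  then show ?thesis
    using assms(2) by (simp add: vec_Re_def vec_Im_def vec_eq_iff complex_eq_iff)
qed

definition gC_isotropic :: "(complex ^ 'n) set \<Rightarrow> bool" where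
  "gC_isotropic S \<longleftrightarrow> (\<forall>u\<in>S. \<forall>v\<in>S. gC u v = 0)"

text \<open>Since gC is nondegenerate, this is the complex span of S; only its closure properties are
  used.\<close>
definition gC_double_annihilator :: "(complex ^ 'n) set \<Rightarrow> (complex ^ 'n) set" where
  "gC_double_annihilator S = {u. \<forall>w. (\<forall>s\<in>S. gC w s = 0) \<longrightarrow> gC w u = 0}"

lemma subset_gC_double_annihilator: "S \<subseteq> gC_double_annihilator S"
  by (auto simp: gC_double_annihilator_def)

lemma subspace_gC_double_annihilator: "subspace (gC_double_annihilator S)"
  by (simp add: subspace_def gC_double_annihilator_def gC_zero_right gC_add_right
      gC_scaleR_right)

lemma mult_mem_gC_double_annihilator:
  "u \<in> gC_double_annihilator S \<Longrightarrow> a *s u \<in> gC_double_annihilator S"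
  by (simp add: gC_double_annihilator_def gC_mult_right)

lemma gC_isotropic_double_annihilator:
  assumes "gC_isotropic S"
  shows "gC_isotropic (gC_double_annihilator S)"
  unfolding gC_isotropic_def
proof (intro ballI)
  fix u v assume u: "u \<in> gC_double_annihilator S" and v: "v \<in> gC_double_annihilator S"
  have "gC s u = 0" if "s \<in> S" for s
    using u assms that unfolding gC_isotropic_def gC_double_annihilator_def by blast
  then show "gC u v = 0"
    using v unfolding gC_double_annihilator_def by (simp add: gC_commute)
qed

lemma gC_isotropic_iff_if_double_annihilators:
  assumes "S \<subseteq> gC_double_annihilator T" and "T \<subseteq> gC_double_annihilator S"
  shows "gC_isotropic S \<longleftrightarrow> gC_isotropic T"
proof -
  have "gC_isotropic A" if "gC_isotropic B" and "A \<subseteq> gC_double_annihilator B" for A B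
    using gC_isotropic_double_annihilator[OF that(1)] that(2) unfolding gC_isotropic_def by blast
  then show ?thesis
    using assms by blast
qed

lemma sums_gC:
  assumes "\<And>i. (\<lambda>j. c j $ i * z ^ j) sums (p $ i)"
  shows "(\<lambda>j. gC w (c j) * z ^ j) sums (gC w p)"
proof -
  have "(\<lambda>j. \<Sum>i\<in>UNIV. w $ i * (c j $ i * z ^ j)) sums (\<Sum>i\<in>UNIV. w $ i * p $ i)"
    by (intro sums_sum sums_mult assms)
  then show ?thesis
    by (simp add: gC_def sum_distrib_right mult.assoc)
qed

lemma powser_values_coeffs_gC_double_annihilator:
  fixes f :: "complex \<Rightarrow> complex ^ 'n" and c :: "nat \<Rightarrow> complex ^ 'n"
  assumes "\<And>z i. (\<lambda>j. c j $ i * z ^ j) sums (f z $ i)"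
  shows "range f \<subseteq> gC_double_annihilator (range c)"
    and "range c \<subseteq> gC_double_annihilator (range f)"
proof -
  have sums: "(\<lambda>j. gC w (c j) * z ^ j) sums (gC w (f z))" for w z
    by (rule sums_gC) (rule assms)
  show "range f \<subseteq> gC_double_annihilator (range c)"
  proof (clarsimp simp: gC_double_annihilator_def)
    fix z w assume "\<forall>j. gC w (c j) = 0"
    then have "(\<lambda>j. 0) sums (gC w (f z))"
      using sums[of w z] by simp
    then show "gC w (f z) = 0"
      using sums_zero sums_unique2 by blast
  qed
  show "range c \<subseteq> gC_double_annihilator (range f)"
  proof (clarsimp simp: gC_double_annihilator_def)
    fix j w assume "\<forall>z. gC w (f z) = 0"
    then have "(\<lambda>j. gC w (c j) * z ^ j) sums 0" for z
      using sums[of w z] by simp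
    then show "gC w (c j) = 0"
      by (rule powser_coeffs_eq_0_if_sums_0)
  qed
qed

lemma orthogonal_complex_structure_vec_Re_image:
  fixes V :: "(complex ^ 'n) set"
  assumes "subspace V" and "\<And>u. u \<in> V \<Longrightarrow> \<i> *s u \<in> V" and "gC_isotropic V"
  obtains J where "orthogonal_complex_structure (vec_Re ` V) J"
    and "\<And>u. u \<in> V \<Longrightarrow> J (vec_Re u) = vec_Re (\<i> *s u)"
proof -
  have "inj_on vec_Re V"
    unfolding linear_inj_on_iff_eq_0[OF linear_vec_Re assms(1)]
    using assms(3) gC_self_eq_0_imp_eq_0 unfolding gC_isotropic_def by blast
  moreover have "span V = V"
    using assms(1) by simp
  ultimately obtain g where g: "linear g" "\<And>u. u \<in> V \<Longrightarrow> g (vec_Re u) = u"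
    using linear_inj_on_left_inverse[OF linear_vec_Re, of V, unfolded \<open>span V = V\<close>] by blast
  define J where "J = vec_Re \<circ> (\<lambda>u. \<i> *s u) \<circ> g"
  have "linear (\<lambda>u::complex ^ 'n. \<i> *s u)"
    by (rule linearI) (simp_all add: vec_eq_iff algebra_simps)
  then have "linear J"
    unfolding J_def using g(1) linear_vec_Re by (intro linear_compose)
  have J_vec_Re: "J (vec_Re u) = vec_Re (\<i> *s u)" if "u \<in> V" for u
    using g(2) that by (simp add: J_def)
  show thesis
  proof (rule that[OF _ J_vec_Re])
    have "J (J (vec_Re u)) = - vec_Re u" if "u \<in> V" for u
    proof -
      have "J (J (vec_Re u)) = vec_Re (\<i> *s (\<i> *s u))"
        using that assms(2) J_vec_Re by metis
      then show ?thesis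
        by (simp add: linear_neg[OF linear_vec_Re])
    qed
    moreover have "J (vec_Re u) \<bullet> J (vec_Re v) = vec_Re u \<bullet> vec_Re v" if "u \<in> V" "v \<in> V" for u v
    proof -
      have "Re (gC u v) = 0"
        using that assms(3) unfolding gC_isotropic_def by simp
      then show ?thesis
        using that by (simp add: J_vec_Re vec_Re_mult_ii Re_gC)
    qed
    ultimately show "orthogonal_complex_structure (vec_Re ` V) J"
      unfolding orthogonal_complex_structure_def using \<open>linear J\<close> assms(2)
      by (auto simp: J_vec_Re)
  qed
qed

lemma gC_isotropic_dz_if_holomorphic_up_to_rigid_motion:
  fixes h :: "complex \<Rightarrow> real ^ 'n"
  assumes "\<And>z. h differentiable (at z)" and "holomorphic_up_to_rigid_motion h"
  shows "gC_isotropic (range (dz h))"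
proof -
  obtain b W J where W: "subspace W" "\<And>z. h z - b \<in> W"
    and J: "orthogonal_complex_structure W J" and hy: "\<And>z. hy h z = J (hx h z)"
    using assms(2) unfolding holomorphic_up_to_rigid_motion_def orthogonal_complex_structure_def
    by metis
  have hx: "hx h z \<in> W" for z
    using translate_in_subspace_iff_partials_in_subspace[OF W(1) assms(1)] W(2) by blast
  have "gC (dz h z) (dz h w) = 0" for z w
  proof -
    have "J (hx h z) \<bullet> J (hx h w) = hx h z \<bullet> hx h w"
      using J hx unfolding orthogonal_complex_structure_def by blast
    moreover have "J (hx h z) \<bullet> hx h w = - (hx h z \<bullet> J (hx h w))"
      using orthogonal_complex_structure_skew[OF J hx hx] .
    ultimately show ?thesis
      by (simp add: complex_eq_iff Re_gC Im_gC vec_Re_dz vec_Im_dz hy)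
  qed
  then show ?thesis
    unfolding gC_isotropic_def by blast
qed

lemma holomorphic_up_to_rigid_motion_if_gC_isotropic_dz:
  fixes h :: "complex \<Rightarrow> real ^ 'n"
  assumes "\<And>z. h differentiable (at z)" and "gC_isotropic (range (dz h))"
  shows "holomorphic_up_to_rigid_motion h"
proof -
  define V where "V = gC_double_annihilator (range (dz h))"
  have V: "subspace V" "\<And>u. u \<in> V \<Longrightarrow> \<i> *s u \<in> V" "gC_isotropic V" "\<And>z. dz h z \<in> V"
    unfolding V_def
    using subspace_gC_double_annihilator mult_mem_gC_double_annihilator
      gC_isotropic_double_annihilator[OF assms(2)]
      subset_gC_double_annihilator[of "range (dz h)"]
    by auto
  define W where "W = vec_Re ` V"
  obtain J where J: "orthogonal_complex_structure W J"
    and J_vec_Re: "\<And>u. u \<in> V \<Longrightarrow> J (vec_Re u) = vec_Re (\<i> *s u)"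
    using orthogonal_complex_structure_vec_Re_image[OF V(1-3)] unfolding W_def by blast
  have "subspace W"
    unfolding W_def using linear_subspace_image[OF linear_vec_Re V(1)] .
  have hx: "hx h z = 2 *\<^sub>R vec_Re (dz h z)" for z
    by (simp add: vec_Re_dz)
  have hy: "hy h z = 2 *\<^sub>R vec_Re (\<i> *s dz h z)" for z
    by (simp add: vec_Re_mult_ii vec_Im_dz)
  have "vec_Re (dz h z) \<in> W" "vec_Re (\<i> *s dz h z) \<in> W" for z
    unfolding W_def using V(2,4) by blast+
  then have "hx h z \<in> W \<and> hy h z \<in> W" for z
    unfolding hx hy using subspace_scale[OF \<open>subspace W\<close>] by blast
  then obtain b where "\<forall>z. h z - b \<in> W"
    using translate_in_subspace_iff_partials_in_subspace[OF \<open>subspace W\<close> assms(1)] by blast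
  moreover have "J (hx h z) = hy h z \<and> J (hy h z) = - hx h z" for z
    using J V(2,4) unfolding orthogonal_complex_structure_def hx hy
    by (simp add: linear_scale J_vec_Re linear_neg[OF linear_vec_Re])
  ultimately show ?thesis
    unfolding holomorphic_up_to_rigid_motion_def
    using \<open>subspace W\<close> J even_dim_if_orthogonal_complex_structure[OF \<open>subspace W\<close> J]
    unfolding orthogonal_complex_structure_def by blast
qed

theorem theorem2p1:
  fixes h :: "complex \<Rightarrow> real ^ 'n" and c :: "nat \<Rightarrow> complex ^ 'n"
  assumes "branched_minimal_immersion h"
    and "\<And>z i. (\<lambda>j. c j $ i * z ^ j) sums (dz h z $ i)"
  shows "holomorphic_up_to_rigid_motion h \<longleftrightarrow> (\<forall>m k. gC (c m) (c k) = 0)"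
proof -
  have differentiable: "h differentiable (at z)" for z
    using assms(1) iter_pd.simps(1)
    unfolding branched_minimal_immersion_def smooth_map_def by metis
  have "gC_isotropic (range (dz h)) \<longleftrightarrow> gC_isotropic (range c)"
    using powser_values_coeffs_gC_double_annihilator[OF assms(2)]
    by (rule gC_isotropic_iff_if_double_annihilators)
  then show ?thesis
    using gC_isotropic_dz_if_holomorphic_up_to_rigid_motion[OF differentiable]
      holomorphic_up_to_rigid_motion_if_gC_isotropic_dz[OF differentiable]
    unfolding gC_isotropic_def by blast
qed

end
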